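(* Let $X$ be a compact metric space, $r\in\omega$, and $\mathcal C_i\subseteq\mathcal P(X)$ for $i<r$. Let $P^\nu_i$ be the optimal derivation sequence for $\mathcal C_i$, and let $Q^\nu$ be the optimal derivation sequence for $\{\bigcap_{i<r}C_i: C_i\in\mathcal C_i \text{ for each } i<r\}$. Then for all ordinals $(\nu_i)_{i<r}$, $Q^{\#_{i<r}\nu_i}\subseteq\bigcup_{i<r}P_i^{\nu_i}$.
   Context: Optimal derivation sequence: for $\mathcal C\subseteq\mathcal P(X)$, define $P^0=X$, $P^{\nu+1}=P^\nu\setminus\bigcup\{U\subseteq X \text{ open}: P^\nu\cap U\subseteq C\text{ for some }C\in\mathcal C\}$, and $P^\lambda=\bigcap_{\nu<\lambda}P^\nu$ for limit $\lambda$. Natural (Hessenberg) sum: if $\alpha$ and $\beta$ have Cantor normal forms with exponents among $\xi_1>\dots>\xi_r$, $\alpha=\sum_i\omega^{\xi_i}m_i$, $\beta=\sum_i\omega^{\xi_i}n_i$ ($m_i,n_i\in\mathbb N$), then $\alpha\#\beta=\sum_i\omega^{\xi_i}(m_i+n_i)$; $\#_{i<r}\nu_i$ is the iterated natural sum (with value $0$ if $r=0$). *)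

theory Defs
  imports "HOL-Analysis.Analysis" "HOL-Library.Multiset_Order"
begin

definition deriv_step :: "'a::topological_space set \<Rightarrow> 'a set set \<Rightarrow> 'a set \<Rightarrow> 'a set" where
  "deriv_step X \<C> P =
     P - \<Union>{U. openin (top_of_set X) U \<and> (\<exists>C\<in>\<C>. P \<inter> U \<subseteq> C)}"

text \<open>Optimal derivation sequence, indexed by an arbitrary well-ordered type \<open>'o\<close>
(playing the role of an initial segment of the ordinals), defined by transfinite
recursion: value \<open>X\<close> at the least element, a derivation step at successors, and
intersection of all earlier stages at limits.\<close>
definition is_succ_of :: "'o::wellorder \<Rightarrow> 'o \<Rightarrow> bool" where
  "is_succ_of \<nu> \<mu> \<longleftrightarrow> \<mu> < \<nu> \<and> (\<forall>\<eta>. \<eta> < \<nu> \<longrightarrow> \<eta> \<le> \<mu>)"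

definition opt_deriv :: "'a::topological_space set \<Rightarrow> 'a set set \<Rightarrow> 'o::wellorder \<Rightarrow> 'a set" where
  "opt_deriv X \<C> = wfrec {(x, y). x < y}
     (\<lambda>f \<nu>. if \<not> (\<exists>\<mu>. \<mu> < \<nu>) then X
            else if (\<exists>\<mu>. is_succ_of \<nu> \<mu>) then deriv_step X \<C> (f (THE \<mu>. is_succ_of \<nu> \<mu>))
            else (\<Inter>\<mu>\<in>{\<mu>. \<mu> < \<nu>}. f \<mu>))"

text \<open>An ordinal
\<open>\<omega>^\<xi>\<^sub>1 m\<^sub>1 + \<dots> + \<omega>^\<xi>\<^sub>k m\<^sub>k\<close> (\<open>\<xi>\<^sub>1 > \<dots> > \<xi>\<^sub>k\<close>) with exponents taken from a well-ordered
type \<open>'o\<close> is represented by the finite multiset of its exponents, \<open>\<xi>\<^sub>j\<close> having multiplicity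
\<open>m\<^sub>j\<close>.  With the multiset order of HOL-Library.Multiset_Order this type is order-isomorphic
to the ordinals below \<open>\<omega>^otp('o)\<close>; as \<open>'o\<close> ranges over all well-ordered types this covers
all ordinals.\<close>
type_synonym 'o cnf_ordinal = "'o multiset"

text \<open>Natural (Hessenberg) sum: coefficients of equal exponents are added, i.e. the
multisets of exponents are added; the empty natural sum is \<open>0\<close>.\<close>
definition natural_sum :: "nat \<Rightarrow> (nat \<Rightarrow> 'o cnf_ordinal) \<Rightarrow> 'o cnf_ordinal" where
  "natural_sum r \<nu> = (\<Sum>i<r. \<nu> i)"

end

theory Submission
  imports Defs
begin

(*
  Induction on the natural sum \<sigma> of the \<nu> i.  If y \<in> Q\<^sup>\<sigma> lies in no P\<^sub>i\<^sup>\<nu>\<^sup>i, each P\<^sub>i removes y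
  at a successor stage \<mu> i + 1 \<le> \<nu> i, via a relatively open U i \<ni> y and some C i \<in> \<C> i with
  P\<^sub>i\<^sup>\<mu>\<^sup>i \<inter> U i \<subseteq> C i.  Put \<rho> = (#\<^sub>i \<mu> i) + (r - 1), so that \<rho> + 1 \<le> \<sigma>.  For each j, raising
  every \<mu> k with k \<noteq> j by one gives a tuple with natural sum \<rho>, so by induction Q\<^sup>\<rho> lies in
  P\<^sub>j\<^sup>\<mu>\<^sup>j together with the sets P\<^sub>k\<^sup>\<mu>\<^sup>k\<^sup>+\<^sup>1 (k \<noteq> j), which miss U k.  Hence
  Q\<^sup>\<rho> \<inter> \<Inter>\<^sub>i U i \<subseteq> X \<inter> \<Inter>\<^sub>i C i, and y is removed at stage \<rho> + 1 \<le> \<sigma>.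
*)

lemma the_is_succ_of: "is_succ_of \<nu> \<mu> \<Longrightarrow> (THE \<mu>. is_succ_of \<nu> \<mu>) = \<mu>"
  by (metis is_succ_of_def antisym_conv2 the_equality not_less)

lemma opt_deriv_unfold:
  "opt_deriv X \<C> (\<nu>::'o::wellorder) =
     (if \<not> (\<exists>\<mu>. \<mu> < \<nu>) then X
      else if (\<exists>\<mu>. is_succ_of \<nu> \<mu>) then deriv_step X \<C> (opt_deriv X \<C> (THE \<mu>. is_succ_of \<nu> \<mu>))
      else (\<Inter>\<mu>\<in>{\<mu>. \<mu> < \<nu>}. opt_deriv X \<C> \<mu>))"
  unfolding opt_deriv_def
  by (subst wfrec[OF wf]) (auto simp: cut_def is_succ_of_def the_is_succ_of)

lemma opt_deriv_least: "\<not> (\<exists>\<mu>. \<mu> < \<nu>) \<Longrightarrow> opt_deriv X \<C> (\<nu>::'o::wellorder) = X"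
  by (subst opt_deriv_unfold) simp

lemma opt_deriv_succ: "is_succ_of \<nu> \<mu> \<Longrightarrow> opt_deriv X \<C> \<nu> = deriv_step X \<C> (opt_deriv X \<C> \<mu>)"
  by (subst opt_deriv_unfold) (auto simp: the_is_succ_of is_succ_of_def)

lemma opt_deriv_limit:
  "\<exists>\<mu>. \<mu> < \<nu> \<Longrightarrow> \<not> (\<exists>\<mu>. is_succ_of \<nu> \<mu>) \<Longrightarrow>
    opt_deriv X \<C> (\<nu>::'o::wellorder) = (\<Inter>\<mu>\<in>{\<mu>. \<mu> < \<nu>}. opt_deriv X \<C> \<mu>)"
  by (subst opt_deriv_unfold) auto

lemma deriv_step_subset: "deriv_step X \<C> P \<subseteq> P"
  by (auto simp: deriv_step_def)

lemma opt_deriv_antimono: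
  "\<mu> \<le> \<nu> \<Longrightarrow> opt_deriv X \<C> (\<nu>::'o::wellorder) \<subseteq> opt_deriv X \<C> \<mu>"
proof (induction \<nu> arbitrary: \<mu> rule: less_induct)
  case (less \<nu>)
  show ?case
  proof (cases "\<mu> = \<nu>")
    case False
    with less.prems have "\<mu> < \<nu>" by simp
    show ?thesis
    proof (cases "\<exists>\<eta>. is_succ_of \<nu> \<eta>")
      case True
      then obtain \<eta> where \<eta>: "is_succ_of \<nu> \<eta>" ..
      with \<open>\<mu> < \<nu>\<close> have "\<mu> \<le> \<eta>" "\<eta> < \<nu>"
        unfolding is_succ_of_def by blast+
      then have "opt_deriv X \<C> \<eta> \<subseteq> opt_deriv X \<C> \<mu>"
        using less.IH by blast
      then show ?thesis
        using opt_deriv_succ[OF \<eta>] deriv_step_subset by blast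
    next
      case False
      with \<open>\<mu> < \<nu>\<close> show ?thesis
        using opt_deriv_limit by blast
    qed
  qed simp
qed

lemma opt_deriv_subset: "opt_deriv X \<C> (\<nu>::'o::wellorder) \<subseteq> X"
proof -
  have "\<not> (\<exists>\<mu>. \<mu> < (LEAST \<mu>::'o. True))"
    using not_less_Least by blast
  then show ?thesis
    using opt_deriv_antimono[OF Least_le, of "\<lambda>_. True" \<nu>] opt_deriv_least by blast
qed

lemma notin_opt_deriv_imp_removed:
  assumes "y \<in> X" "y \<notin> opt_deriv X \<C> (\<nu>::'o::wellorder)"
  shows "\<exists>\<mu><\<nu>. \<exists>U. openin (top_of_set X) U \<and> y \<in> U \<and> (\<exists>C\<in>\<C>. opt_deriv X \<C> \<mu> \<inter> U \<subseteq> C)"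
proof -
  define \<nu>\<^sub>0 where "\<nu>\<^sub>0 = (LEAST \<nu>::'o. y \<notin> opt_deriv X \<C> \<nu>)"
  have y\<nu>\<^sub>0: "y \<notin> opt_deriv X \<C> \<nu>\<^sub>0"
    unfolding \<nu>\<^sub>0_def by (rule LeastI_ex) (use assms(2) in blast)
  have "\<nu>\<^sub>0 \<le> \<nu>"
    unfolding \<nu>\<^sub>0_def using assms(2) by (rule Least_le)
  have earlier: "y \<in> opt_deriv X \<C> \<mu>" if "\<mu> < \<nu>\<^sub>0" for \<mu>
    using not_less_Least that unfolding \<nu>\<^sub>0_def by blast
  obtain \<mu> where \<mu>: "is_succ_of \<nu>\<^sub>0 \<mu>"
  proof (cases "\<exists>\<mu>. is_succ_of \<nu>\<^sub>0 \<mu>")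
    case False
    have "\<exists>\<mu>. \<mu> < \<nu>\<^sub>0"
      using y\<nu>\<^sub>0 assms(1) opt_deriv_least by metis
    from this False have "opt_deriv X \<C> \<nu>\<^sub>0 = (\<Inter>\<mu>\<in>{\<mu>. \<mu> < \<nu>\<^sub>0}. opt_deriv X \<C> \<mu>)"
      by (rule opt_deriv_limit)
    with y\<nu>\<^sub>0 earlier show ?thesis by auto
  qed blast
  then have "\<mu> < \<nu>" "y \<in> opt_deriv X \<C> \<mu>"
    using \<open>\<nu>\<^sub>0 \<le> \<nu>\<close> earlier by (auto simp: is_succ_of_def)
  moreover have "y \<notin> deriv_step X \<C> (opt_deriv X \<C> \<mu>)"
    using y\<nu>\<^sub>0 opt_deriv_succ[OF \<mu>, of X \<C>] by simp
  ultimately show ?thesis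
    by (auto simp: deriv_step_def)
qed

definition cnf_one :: "'o::wellorder cnf_ordinal" where
  "cnf_one = {#LEAST \<xi>. True#}"

lemma less_imp_add_cnf_one_le:
  fixes M N :: "'o::wellorder cnf_ordinal"
  assumes "M < N"
  shows "M + cnf_one \<le> N"
proof -
  define b where "b = (LEAST \<xi>::'o. True)"
  have b_least: "b \<le> \<xi>" for \<xi>
    unfolding b_def by (rule Least_le) (rule TrueI)
  obtain z where z: "count M z < count N z"
    using lt_imp_ex_count_lt[OF assms] by blast
  have dominated: "\<exists>x>y. count M x < count N x" if "count N y < count M y" for y
    using assms that unfolding less_multiset\<^sub>H\<^sub>O by blast
  have "\<exists>x>y. count (M + {#b#}) x < count N x" if y: "count N y < count (M + {#b#}) y" for y
  proof (cases "y = b")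
    case True
    with y z have "b < z"
      using b_least[of z] by (cases "z = b") auto
    with True z show ?thesis
      by (intro exI[of _ z]) auto
  next
    case False
    with y dominated obtain x where "y < x" "count M x < count N x"
      by fastforce
    moreover have "x \<noteq> b"
      using \<open>y < x\<close> b_least[of y] by auto
    ultimately show ?thesis
      by (intro exI[of _ x]) simp
  qed
  then show ?thesis
    unfolding less_eq_multiset\<^sub>H\<^sub>O cnf_one_def b_def by blast
qed

lemma is_succ_of_add_cnf_one: "is_succ_of (M + cnf_one) (M :: 'o::wellorder cnf_ordinal)"
  unfolding is_succ_of_def
  using less_imp_add_cnf_one_le by (auto simp: cnf_one_def not_le[symmetric])

lemma opt_deriv_add_cnf_one:
  "opt_deriv X \<C> (M + cnf_one) = deriv_step X \<C> (opt_deriv X \<C> (M :: 'o::wellorder cnf_ordinal))"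
  by (rule opt_deriv_succ[OF is_succ_of_add_cnf_one])

lemma sum_add_except_one:
  fixes f :: "'i \<Rightarrow> 'b::comm_monoid_add"
  assumes "finite A" "j \<in> A"
  shows "(\<Sum>k\<in>A. f k + (if k = j then 0 else c)) + c = (\<Sum>k\<in>A. f k + c)"
  using assms by (simp add: sum.distrib sum.remove[of A j] add_ac sum.If_cases Diff_eq)

definition meet_family :: "'a set \<Rightarrow> nat \<Rightarrow> (nat \<Rightarrow> 'a set set) \<Rightarrow> 'a set set" where
  "meet_family X r \<C> = {X \<inter> (\<Inter>i<r. C i) | C. \<forall>i<r. C i \<in> \<C> i}"

lemma opt_deriv_meet_family_step:
  fixes X :: "'a::topological_space set" and r :: nat and \<C> :: "nat \<Rightarrow> 'a set set"
    and \<nu> :: "nat \<Rightarrow> 'o::wellorder cnf_ordinal"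
  defines "Q \<equiv> opt_deriv X (meet_family X r \<C>)"
  assumes "0 < r"
    and IH: "\<And>\<nu>'. natural_sum r \<nu>' < natural_sum r \<nu> \<Longrightarrow>
               Q (natural_sum r \<nu>') \<subseteq> (\<Union>i<r. opt_deriv X (\<C> i) (\<nu>' i))"
  shows "Q (natural_sum r \<nu>) \<subseteq> (\<Union>i<r. opt_deriv X (\<C> i) (\<nu> i))"
proof
  fix y assume yQ: "y \<in> Q (natural_sum r \<nu>)"
  show "y \<in> (\<Union>i<r. opt_deriv X (\<C> i) (\<nu> i))"
  proof (rule ccontr)
    assume y_removed: "y \<notin> (\<Union>i<r. opt_deriv X (\<C> i) (\<nu> i))"
    have "y \<in> X"
      using yQ opt_deriv_subset unfolding Q_def by blast
    have "\<exists>\<mu><\<nu> i. \<exists>U. openin (top_of_set X) U \<and> y \<in> U \<and>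
                (\<exists>C\<in>\<C> i. opt_deriv X (\<C> i) \<mu> \<inter> U \<subseteq> C)" if "i < r" for i
      using y_removed that by (intro notin_opt_deriv_imp_removed[OF \<open>y \<in> X\<close>]) blast
    then obtain \<mu> U C where \<mu>: "\<And>i. i < r \<Longrightarrow> \<mu> i < \<nu> i"
      and U: "\<And>i. i < r \<Longrightarrow> openin (top_of_set X) (U i) \<and> y \<in> U i"
      and C: "\<And>i. i < r \<Longrightarrow> C i \<in> \<C> i \<and> opt_deriv X (\<C> i) (\<mu> i) \<inter> U i \<subseteq> C i"
      by metis
    define bump where "bump j k = \<mu> k + (if k = j then 0 else cnf_one)" for j k
    define \<rho> where "\<rho> = natural_sum r (bump 0)"
    have sum_bump: "natural_sum r (bump j) + cnf_one = (\<Sum>k<r. \<mu> k + cnf_one)" if "j < r" for j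
      unfolding natural_sum_def bump_def using sum_add_except_one[of "{..<r}" j \<mu> cnf_one] that by simp
    have \<rho>_bump: "natural_sum r (bump j) = \<rho>" if "j < r" for j
      using sum_bump[OF that] sum_bump[OF \<open>0 < r\<close>] unfolding \<rho>_def by (metis add_right_cancel)
    have \<rho>_succ_le: "\<rho> + cnf_one \<le> natural_sum r \<nu>"
      using sum_bump[OF \<open>0 < r\<close>] \<mu> less_imp_add_cnf_one_le
      unfolding \<rho>_def natural_sum_def by (metis lessThan_iff sum_mono)
    have "\<rho> < \<rho> + cnf_one"
      by (simp add: cnf_one_def)
    from this \<rho>_succ_le have "\<rho> < natural_sum r \<nu>"
      by (rule less_le_trans)
    have "y \<in> deriv_step X (meet_family X r \<C>) (Q \<rho>)"
      using yQ \<rho>_succ_le opt_deriv_antimono opt_deriv_add_cnf_one unfolding Q_def by blast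
    moreover have "Q \<rho> \<inter> (\<Inter>i<r. U i) \<subseteq> X \<inter> (\<Inter>i<r. C i)"
    proof
      fix z assume z: "z \<in> Q \<rho> \<inter> (\<Inter>i<r. U i)"
      have "z \<in> C j" if j: "j < r" for j
      proof -
        have "z \<in> Q (natural_sum r (bump j))"
          using z \<rho>_bump[OF j] by simp
        then obtain k where "k < r" "z \<in> opt_deriv X (\<C> k) (bump j k)"
          using IH[of "bump j"] \<open>\<rho> < natural_sum r \<nu>\<close> \<rho>_bump[OF j] by auto
        moreover have "k = j"
        proof (rule ccontr)
          assume "k \<noteq> j"
          then have "opt_deriv X (\<C> k) (bump j k) = deriv_step X (\<C> k) (opt_deriv X (\<C> k) (\<mu> k))"
            unfolding bump_def by (simp add: opt_deriv_add_cnf_one)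
          moreover have "z \<in> U k"
            using z \<open>k < r\<close> by blast
          ultimately show False
            using \<open>z \<in> opt_deriv X (\<C> k) (bump j k)\<close> U[OF \<open>k < r\<close>] C[OF \<open>k < r\<close>]
            unfolding deriv_step_def by blast
        qed
        ultimately show "z \<in> C j"
          using z C[OF j] unfolding bump_def by auto
      qed
      moreover have "z \<in> X"
        using z opt_deriv_subset unfolding Q_def by blast
      ultimately show "z \<in> X \<inter> (\<Inter>i<r. C i)" by blast
    qed
    moreover have "openin (top_of_set X) (\<Inter>i<r. U i)"
      using U \<open>0 < r\<close> by (intro openin_INT2) auto
    moreover have "X \<inter> (\<Inter>i<r. C i) \<in> meet_family X r \<C>"
      using C unfolding meet_family_def by (auto intro!: exI[of _ C])
    ultimately show False
      using U \<open>0 < r\<close> unfolding deriv_step_def by blast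
  qed
qed

lemma opt_deriv_meet_family_natural_sum:
  fixes X :: "'a::topological_space set" and \<nu> :: "nat \<Rightarrow> 'o::wellorder cnf_ordinal"
  assumes "0 < r"
  shows "opt_deriv X (meet_family X r \<C>) (natural_sum r \<nu>) \<subseteq> (\<Union>i<r. opt_deriv X (\<C> i) (\<nu> i))"
proof -
  have "\<forall>\<nu>. natural_sum r \<nu> = \<sigma> \<longrightarrow>
          opt_deriv X (meet_family X r \<C>) \<sigma> \<subseteq> (\<Union>i<r. opt_deriv X (\<C> i) (\<nu> i))"
    for \<sigma> :: "'o cnf_ordinal"
  proof (induction \<sigma> rule: less_induct)
    case (less \<sigma>)
    then show ?case
      using opt_deriv_meet_family_step[OF assms] by blast
  qed
  then show ?thesis by blast
qed

theorem mainTheorem17: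
  fixes X :: "'a::metric_space set"
    and r :: nat
    and \<C> :: "nat \<Rightarrow> 'a set set"
    and \<nu> :: "nat \<Rightarrow> ('o::wellorder) cnf_ordinal"
  assumes "compact X"
    and "0 < r"
    and "\<And>i C. i < r \<Longrightarrow> C \<in> \<C> i \<Longrightarrow> C \<subseteq> X"
  shows "opt_deriv X {X \<inter> (\<Inter>i<r. C i) | C. \<forall>i<r. C i \<in> \<C> i} (natural_sum r \<nu>)
           \<subseteq> (\<Union>i<r. opt_deriv X (\<C> i) (\<nu> i))"
  using opt_deriv_meet_family_natural_sum[OF assms(2)] unfolding meet_family_def .

end
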